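(* Let $A$ be an algorithm of type GroupLIS$(\beta)$, $\beta\in\mathbb{N}$, run with some speedup $s$, and let $I$ be a time interval during which the list $L$ of pending tasks of some cost $c$ contains at least $\beta n^2$ tasks at all times. Then for any two distinct absolute task executions fully contained in $I$, of tasks $\tau_1,\tau_2\in L$ by processors $p_1$ and $p_2$ respectively, we have $\tau_1\ne\tau_2$.
   Context: Model: $n$ processors with ids $1,\dots,n$ and a shared repository; tasks with ids, arrival times and costs are injected over time, processors may crash and restart. A task is pending if injected and its completion not yet reported; once reported it is immediately removed from the pending set. A processor repeatedly obtains the pending set, chooses a task, executes it (a task of cost $\ell$ takes time $\ell/s$ under speedup $s$) and reports it; execution is non-preemptive and a crash loses progress. An absolute task execution of task $\tau$ is an interval $[t,t']$ such that a processor schedules $\tau$ at time $t$ and reports its completion at $t'$ without stopping its execution within $[t,t')$. An algorithm is of type GroupLIS$(\beta)$ if it partitions pending tasks into classes of equal cost, sorts each class in increasing order of arrival time, and whenever a class contains at least $\beta n^2$ pending tasks and a processor $p$ schedules a task from that class, it schedules the $(p\cdot\beta n)$-th task of the class. *)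

theory Defs
  imports Complex_Main "HOL-Library.Product_Lexorder"
begin

text \<open>Processors are 1..n. Tasks are elements of a type 'a (their ids), with arrival
  (injection) time arr and cost cost. A run is described by
  exec p u = Some (tau, t): at time u processor p is executing task tau, whose
  (current, uninterrupted) execution it scheduled at time t; None: idle/crashed.
  A crash or a restart of a task loses progress: a new execution gets a new start time.\<close>

definition reports ::
  "nat \<Rightarrow> real \<Rightarrow> ('a \<Rightarrow> real) \<Rightarrow> (nat \<Rightarrow> real \<Rightarrow> ('a \<times> real) option)
   \<Rightarrow> nat \<Rightarrow> 'a \<Rightarrow> real \<Rightarrow> bool" where
  "reports n s cost exec p tau r \<longleftrightarrow>
     p \<in> {1..n} \<and>
     (\<exists>t. r = t + cost tau / s \<and> (\<forall>u. t \<le> u \<and> u < r \<longrightarrow> exec p u = Some (tau, t)))"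

definition abs_exec ::
  "nat \<Rightarrow> real \<Rightarrow> ('a \<Rightarrow> real) \<Rightarrow> (nat \<Rightarrow> real \<Rightarrow> ('a \<times> real) option)
   \<Rightarrow> nat \<Rightarrow> 'a \<Rightarrow> real \<Rightarrow> real \<Rightarrow> bool" where
  "abs_exec n s cost exec p tau t t' \<longleftrightarrow>
     p \<in> {1..n} \<and> t' = t + cost tau / s \<and>
     (\<forall>u. t \<le> u \<and> u < t' \<longrightarrow> exec p u = Some (tau, t))"

definition pending ::
  "nat \<Rightarrow> real \<Rightarrow> ('a \<Rightarrow> real) \<Rightarrow> ('a \<Rightarrow> real) \<Rightarrow> (nat \<Rightarrow> real \<Rightarrow> ('a \<times> real) option)
   \<Rightarrow> real \<Rightarrow> 'a set" where
  "pending n s arr cost exec t =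
     {tau. arr tau \<le> t \<and> \<not> (\<exists>p r. r \<le> t \<and> reports n s cost exec p tau r)}"

text \<open>The list L of pending tasks of cost c at time t (as a set).\<close>
definition pending_class ::
  "nat \<Rightarrow> real \<Rightarrow> ('a \<Rightarrow> real) \<Rightarrow> ('a \<Rightarrow> real) \<Rightarrow> (nat \<Rightarrow> real \<Rightarrow> ('a \<times> real) option)
   \<Rightarrow> real \<Rightarrow> real \<Rightarrow> 'a set" where
  "pending_class n s arr cost exec c t = {tau \<in> pending n s arr cost exec t. cost tau = c}"

text \<open>1-based position of tau in C sorted by increasing arrival time (ties broken by id).\<close>
definition rank :: "('a::linorder \<Rightarrow> real) \<Rightarrow> 'a set \<Rightarrow> 'a \<Rightarrow> nat" where
  "rank arr C tau = card {x \<in> C. (arr x, x) < (arr tau, tau)} + 1"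

definition valid_run ::
  "nat \<Rightarrow> real \<Rightarrow> ('a \<Rightarrow> real) \<Rightarrow> ('a \<Rightarrow> real) \<Rightarrow> (nat \<Rightarrow> real \<Rightarrow> ('a \<times> real) option) \<Rightarrow> bool" where
  "valid_run n s arr cost exec \<longleftrightarrow>
     (\<forall>tau. cost tau > 0) \<and>
     (\<forall>t. finite {tau. arr tau \<le> t}) \<and>
     (\<forall>p u. p \<notin> {1..n} \<longrightarrow> exec p u = None) \<and>
     (\<forall>p u tau t. exec p u = Some (tau, t) \<longrightarrow> t \<le> u \<and> u < t + cost tau / s) \<and>
     (\<forall>p u tau t. exec p u = Some (tau, t) \<longrightarrow> (\<forall>v. t \<le> v \<and> v \<le> u \<longrightarrow> exec p v = Some (tau, t))) \<and>
     (\<forall>p tau t. exec p t = Some (tau, t) \<longrightarrow> tau \<in> pending n s arr cost exec t)"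

definition group_LIS ::
  "nat \<Rightarrow> nat \<Rightarrow> real \<Rightarrow> ('a::linorder \<Rightarrow> real) \<Rightarrow> ('a \<Rightarrow> real)
   \<Rightarrow> (nat \<Rightarrow> real \<Rightarrow> ('a \<times> real) option) \<Rightarrow> bool" where
  "group_LIS \<beta> n s arr cost exec \<longleftrightarrow>
     (\<forall>p tau t. exec p t = Some (tau, t) \<and>
        card (pending_class n s arr cost exec (cost tau) t) \<ge> \<beta> * n^2 \<longrightarrow>
        rank arr (pending_class n s arr cost exec (cost tau) t) tau = p * \<beta> * n)"

end

theory Submission
  imports Defs
begin

text \<open>Suppose the same task \<open>\<tau>\<close> of cost \<open>c\<close> is executed on \<open>[t1,t1']\<close> by \<open>p1\<close> and on
  \<open>[t2,t2']\<close> by \<open>p2\<close>, with \<open>t1 < t2\<close>. As \<open>\<tau>\<close> is still pending at \<open>t2\<close>, the two executions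
  overlap, so \<open>p1 \<noteq> p2\<close>. Between \<open>t1\<close> and \<open>t2\<close> no task that arrived before \<open>\<tau>\<close> can join
  the class, so the rank of \<open>\<tau>\<close> can only drop, from \<open>p1\<beta>n\<close> to \<open>p2\<beta>n\<close>; hence at least
  \<open>\<beta>n \<ge> n\<close> tasks of cost \<open>c\<close> are reported within \<open>(t1,t2] \<subseteq> (t1, t1 + c/s)\<close>. Each of them
  must already be running at time \<open>t1\<close> on a processor other than \<open>p1\<close>, and there are
  only \<open>n - 1\<close> of those.\<close>

definition predecessors :: "('a::linorder \<Rightarrow> real) \<Rightarrow> 'a set \<Rightarrow> 'a \<Rightarrow> 'a set" where
  "predecessors arr C \<tau> = {x \<in> C. (arr x, x) < (arr \<tau>, \<tau>)}"

definition running :: "(nat \<Rightarrow> real \<Rightarrow> ('a \<times> real) option) \<Rightarrow> nat set \<Rightarrow> real \<Rightarrow> 'a set" where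
  "running exec Q t = {x. \<exists>q\<in>Q. \<exists>a. exec q t = Some (x, a)}"

lemma rank_eq_card_predecessors: "rank arr C \<tau> = card (predecessors arr C \<tau>) + 1"
  unfolding rank_def predecessors_def ..

lemma card_le_if_subset_running:
  assumes "X \<subseteq> running exec Q t" "finite Q"
  shows "card X \<le> card Q"
proof -
  have "X \<subseteq> (\<lambda>q. fst (the (exec q t))) ` Q"
    using assms(1) unfolding running_def by force
  then have "card X \<le> card ((\<lambda>q. fst (the (exec q t))) ` Q)"
    using assms(2) by (simp add: card_mono)
  also have "\<dots> \<le> card Q" using assms(2) by (rule card_image_le)
  finally show ?thesis .
qed

lemma card_Diff_ge_rank_gap:
  fixes k p1 p2 :: nat
  assumes "finite A" "B \<subseteq> A"
    and "card A + 1 = p1 * k" "card B + 1 = p2 * k" "p1 \<noteq> p2"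
  shows "k \<le> card (A - B)"
proof -
  have "card B \<le> card A" using assms(1,2) by (rule card_mono)
  then have "p2 * k \<le> p1 * k" using assms(3,4) by linarith
  moreover have "k > 0" using assms(3) by (cases k) auto
  ultimately have "Suc p2 \<le> p1" using assms(5) by (simp add: mult_le_cancel2)
  then have "Suc p2 * k \<le> p1 * k" by (rule mult_le_mono1)
  then show ?thesis
    using assms card_Diff_subset[OF finite_subset[OF assms(2,1)] assms(2)] by simp
qed

lemma abs_exec_start:
  assumes "s > 0" "valid_run n s arr cost exec" "abs_exec n s cost exec p \<tau> t t'"
  shows "exec p t = Some (\<tau>, t)" "t < t'" "p \<in> {1..n}"
proof -
  have "cost \<tau> / s > 0" using assms(1,2) unfolding valid_run_def by simp
  then show "t < t'" "exec p t = Some (\<tau>, t)" "p \<in> {1..n}"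
    using assms(3) unfolding abs_exec_def by auto
qed

lemma scheduled_pending:
  "valid_run n s arr cost exec \<Longrightarrow> exec p t = Some (\<tau>, t) \<Longrightarrow> \<tau> \<in> pending n s arr cost exec t"
  unfolding valid_run_def by blast

lemma pending_before_report:
  assumes "x \<in> pending n s arr cost exec u" "reports n s cost exec p x r"
  shows "u < r"
proof -
  have "\<not> r \<le> u" using assms unfolding pending_def by blast
  then show ?thesis by simp
qed

lemma abs_exec_reports: "abs_exec n s cost exec p \<tau> t t' \<Longrightarrow> reports n s cost exec p \<tau> t'"
  unfolding abs_exec_def reports_def by blast

lemma pending_if_pending_later:
  assumes "x \<in> pending n s arr cost exec t2" "arr x \<le> t1" "t1 \<le> t2"
  shows "x \<in> pending n s arr cost exec t1"
  using assms unfolding pending_def by force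

lemma predecessors_pending_class_antimono:
  assumes "arr \<tau> \<le> t1" "t1 \<le> t2"
  shows "predecessors arr (pending_class n s arr cost exec c t2) \<tau>
         \<subseteq> predecessors arr (pending_class n s arr cost exec c t1) \<tau>"
proof
  fix x assume x: "x \<in> predecessors arr (pending_class n s arr cost exec c t2) \<tau>"
  then have "arr x \<le> t1"
    using assms(1) unfolding predecessors_def by (auto simp: less_prod_def)
  with x assms(2) show "x \<in> predecessors arr (pending_class n s arr cost exec c t1) \<tau>"
    unfolding predecessors_def pending_class_def by (auto intro: pending_if_pending_later)
qed

lemma finite_pending_class:
  "valid_run n s arr cost exec \<Longrightarrow> finite (pending_class n s arr cost exec c t)"
  unfolding valid_run_def pending_class_def pending_def
  by (elim conjE) (rule finite_subset[of _ "{x. arr x \<le> t}"]; blast)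

text \<open>A task whose report falls into \<open>(t1, t2]\<close> started before \<open>t1\<close>, because a single
  execution lasts longer than \<open>t2 - t1\<close>.\<close>
lemma completed_in_window_was_running:
  assumes "x \<in> pending n s arr cost exec t1" "x \<notin> pending n s arr cost exec t2"
    and "t1 \<le> t2" "t2 < t1 + cost x / s"
  shows "\<exists>q\<in>{1..n}. \<exists>a. a < t1 \<and> exec q t1 = Some (x, a)"
proof -
  obtain q r where "r \<le> t2" and rep: "reports n s cost exec q x r"
    using assms(1-3) unfolding pending_def by auto
  obtain a where q: "q \<in> {1..n}" and "r = a + cost x / s"
    and run: "\<forall>u. a \<le> u \<and> u < r \<longrightarrow> exec q u = Some (x, a)"
    using rep unfolding reports_def by blast
  have "a < t1" using \<open>r \<le> t2\<close> \<open>r = a + cost x / s\<close> assms(4) by simp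
  moreover have "t1 < r" using assms(1) rep by (rule pending_before_report)
  then have "exec q t1 = Some (x, a)" using run \<open>a < t1\<close> by simp
  ultimately show ?thesis using q by blast
qed

lemma pending_class_Diff_subset_running:
  assumes "t1 \<le> t2" "t2 < t1 + c / s" "exec p t1 = Some (\<tau>, t1)"
  shows "pending_class n s arr cost exec c t1 - pending_class n s arr cost exec c t2
         \<subseteq> running exec ({1..n} - {p}) t1"
proof
  fix x assume "x \<in> pending_class n s arr cost exec c t1 - pending_class n s arr cost exec c t2"
  then obtain q a where "q \<in> {1..n}" "a < t1" "exec q t1 = Some (x, a)"
    using completed_in_window_was_running[of x n s arr cost exec t1 t2] assms(1,2)
    unfolding pending_class_def by auto
  then show "x \<in> running exec ({1..n} - {p}) t1"
    unfolding running_def using assms(3) by force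
qed

lemma group_LIS_rank:
  assumes "group_LIS \<beta> n s arr cost exec" "exec p t = Some (\<tau>, t)"
    "\<beta> * n^2 \<le> card (pending_class n s arr cost exec (cost \<tau>) t)"
  shows "card (predecessors arr (pending_class n s arr cost exec (cost \<tau>) t) \<tau>) + 1 = p * (\<beta> * n)"
  using assms unfolding group_LIS_def rank_eq_card_predecessors by (simp add: mult.assoc)

lemma group_LIS_no_later_reexecution:
  fixes arr cost :: "'a::linorder \<Rightarrow> real"
  assumes "s > 0" and V: "valid_run n s arr cost exec" and G: "group_LIS \<beta> n s arr cost exec"
    and full1: "\<beta> * n^2 \<le> card (pending_class n s arr cost exec (cost \<tau>) t1)"
    and full2: "\<beta> * n^2 \<le> card (pending_class n s arr cost exec (cost \<tau>) t2)"
    and A1: "abs_exec n s cost exec p1 \<tau> t1 t1'"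
    and A2: "abs_exec n s cost exec p2 \<tau> t2 t2'"
    and "t1 < t2"
  shows False
proof -
  define A where "A = predecessors arr (pending_class n s arr cost exec (cost \<tau>) t1) \<tau>"
  define B where "B = predecessors arr (pending_class n s arr cost exec (cost \<tau>) t2) \<tau>"
  have e1: "exec p1 t1 = Some (\<tau>, t1)" and p1: "p1 \<in> {1..n}"
    using abs_exec_start[OF assms(1) V A1] by auto
  have e2: "exec p2 t2 = Some (\<tau>, t2)"
    using abs_exec_start[OF assms(1) V A2] by auto
  have rank1: "card A + 1 = p1 * (\<beta> * n)"
    unfolding A_def using G e1 full1 by (rule group_LIS_rank)
  have rank2: "card B + 1 = p2 * (\<beta> * n)"
    unfolding B_def using G e2 full2 by (rule group_LIS_rank)
  have "t2 < t1'"
    using scheduled_pending[OF V e2] abs_exec_reports[OF A1] by (rule pending_before_report)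
  then have "exec p1 t2 = Some (\<tau>, t1)"
    using A1 \<open>t1 < t2\<close> unfolding abs_exec_def by auto
  then have "p1 \<noteq> p2" using e2 \<open>t1 < t2\<close> by auto
  moreover have "arr \<tau> \<le> t1"
    using scheduled_pending[OF V e1] unfolding pending_def by simp
  then have "B \<subseteq> A"
    unfolding A_def B_def using \<open>t1 < t2\<close> by (simp add: predecessors_pending_class_antimono)
  moreover have "finite A"
    unfolding A_def predecessors_def using finite_pending_class[OF V] by simp
  ultimately have gap: "\<beta> * n \<le> card (A - B)"
    using rank1 rank2 card_Diff_ge_rank_gap by metis
  have "A - B \<subseteq> pending_class n s arr cost exec (cost \<tau>) t1 - pending_class n s arr cost exec (cost \<tau>) t2"
    unfolding A_def B_def predecessors_def by auto
  also have "\<dots> \<subseteq> running exec ({1..n} - {p1}) t1"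
    using \<open>t1 < t2\<close> \<open>t2 < t1'\<close> A1 e1 unfolding abs_exec_def
    by (intro pending_class_Diff_subset_running) auto
  finally have "A - B \<subseteq> running exec ({1..n} - {p1}) t1" .
  then have "card (A - B) \<le> n - 1"
    using card_le_if_subset_running[of "A - B" exec "{1..n} - {p1}" t1] p1 by simp
  moreover have "\<beta> > 0" using rank1 by (cases \<beta>) auto
  then have "n \<le> \<beta> * n" by simp
  moreover have "1 \<le> n" using p1 by simp
  ultimately show False using gap by arith
qed

theorem lemma9:
  fixes n \<beta> :: nat and s c :: real
    and arr cost :: "'a::linorder \<Rightarrow> real"
    and exec :: "nat \<Rightarrow> real \<Rightarrow> ('a \<times> real) option"
    and I :: "real set"
    and p1 p2 :: nat and \<tau>1 \<tau>2 :: 'a and t1 t1' t2 t2' :: real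
  assumes "s > 0"
    and "valid_run n s arr cost exec"
    and "group_LIS \<beta> n s arr cost exec"
    and "\<forall>x\<in>I. \<forall>y\<in>I. \<forall>z. x \<le> z \<and> z \<le> y \<longrightarrow> z \<in> I"
    and "\<forall>t\<in>I. card (pending_class n s arr cost exec c t) \<ge> \<beta> * n^2"
    and "abs_exec n s cost exec p1 \<tau>1 t1 t1'"
    and "abs_exec n s cost exec p2 \<tau>2 t2 t2'"
    and "{t1..t1'} \<subseteq> I" and "{t2..t2'} \<subseteq> I"
    and "(p1, \<tau>1, t1, t1') \<noteq> (p2, \<tau>2, t2, t2')"
    and "cost \<tau>1 = c" and "cost \<tau>2 = c"
  shows "\<tau>1 \<noteq> \<tau>2"
proof
  assume same: "\<tau>1 = \<tau>2"
  have e1: "exec p1 t1 = Some (\<tau>1, t1)" and e2: "exec p2 t2 = Some (\<tau>1, t2)"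
    and "t1 < t1'" "t2 < t2'"
    using abs_exec_start[OF assms(1,2,6)] abs_exec_start[OF assms(1,2,7)] same by auto
  then have "t1 \<in> I" "t2 \<in> I" using assms(8,9) by auto
  then have full1: "\<beta> * n^2 \<le> card (pending_class n s arr cost exec (cost \<tau>1) t1)"
    and full2: "\<beta> * n^2 \<le> card (pending_class n s arr cost exec (cost \<tau>1) t2)"
    using assms(5,11) by auto
  have A2: "abs_exec n s cost exec p2 \<tau>1 t2 t2'" using assms(7) same by simp
  consider "t1 < t2" | "t2 < t1" | "t1 = t2" by linarith
  then show False
  proof cases
    case 1
    show False by (rule group_LIS_no_later_reexecution[OF assms(1-3) full1 full2 assms(6) A2 1])
  next
    case 2
    show False by (rule group_LIS_no_later_reexecution[OF assms(1-3) full2 full1 A2 assms(6) 2])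
  next
    case 3
    then have "p1 * (\<beta> * n) = p2 * (\<beta> * n)"
      using group_LIS_rank[OF assms(3) e1 full1] group_LIS_rank[OF assms(3) e2 full2] by simp
    moreover have "\<beta> * n > 0"
      using group_LIS_rank[OF assms(3) e1 full1] by (cases "\<beta> * n") auto
    ultimately show False
      using 3 same assms(6,7,10) unfolding abs_exec_def by simp
  qed
qed

end
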